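(* Let $A\in\mathbb{R}^{n\times d}$ have $i$-th row $y^{(i)}\mathbf{x}^{(i)\top}$ for data $\mathbf{x}^{(i)}\in\mathbb{R}^d$, $y^{(i)}\in\{-1,1\}$, and let $\alpha_t=t$. Consider: (Accelerated Perceptron.) $\mathbf{q}_0=\tfrac{\mathbf{1}}{n}$, $\mathbf{v}_0=\mathbf{0}$, $\mathbf{g}_0=\mathbf{0}$, $\theta_{t-1}=\frac{t}{2(t+1)}$, $\beta_t=\frac{t}{t+1}$; for $t=1,\dots,T$: $\mathbf{v}_t=\mathbf{v}_{t-1}-\theta_{t-1}(\mathbf{g}_{t-1}-A^{\top}\mathbf{q}_{t-1})$; $q_{t,i}=\frac{\exp(-y^{(i)}\mathbf{v}_t^{\top}\mathbf{x}^{(i)})}{\sum_{j=1}^n\exp(-y^{(j)}\mathbf{v}_t^{\top}\mathbf{x}^{(j)})}$ for $i\in[n]$; $\mathbf{g}_t=\beta_t(\mathbf{g}_{t-1}-A^{\top}\mathbf{q}_t)$. (Game dynamics.) $g(\mathbf{w},\mathbf{p})=\mathbf{p}^{\top}A\mathbf{w}-\tfrac12\|\mathbf{w}\|_2^2$, $\mathbf{p}_0=\tfrac{\mathbf{1}}{n}$, $h_j(\mathbf{w})=-g(\mathbf{w},\mathbf{p}_j)$, $\ell_j(\mathbf{p})=g(\mathbf{w}_j,\mathbf{p})$; for $t=1,\dots,T$: $\mathbf{w}_t=\arg\min_{\mathbf{w}\in\mathbb{R}^d}\sum_{j=1}^{t-1}\alpha_jh_j(\mathbf{w})+\alpha_th_{t-1}(\mathbf{w})$,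 then $\mathbf{p}_t=\arg\min_{\mathbf{p}\in\Delta^n}\tfrac14\sum_{s=1}^t\alpha_s\ell_s(\mathbf{p})+D_E(\mathbf{p},\tfrac{\mathbf{1}}{n})$; $\overline{\mathbf{w}}_T=\frac{\sum_{t=1}^T\alpha_t\mathbf{w}_t}{\sum_{t=1}^T\alpha_t}$. Then $\mathbf{q}_T=\mathbf{p}_T$ and $\mathbf{v}_T=\tfrac14\sum_{t=1}^T\alpha_t\mathbf{w}_t=\tfrac14\big(\sum_{t=1}^T\alpha_t\big)\overline{\mathbf{w}}_T$.
   Context: $\Delta^n$ is the probability simplex in $\mathbb{R}^n$; $\mathbf{1}$ the all-ones vector; $D_E(\mathbf{p},\mathbf{q})=\sum_ip_i\log(p_i/q_i)$ (KL divergence, the Bregman divergence of negative entropy). *)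

theory Defs
  imports "HOL-Analysis.Analysis"
begin

definition data_matrix :: "('n \<Rightarrow> real^'d) \<Rightarrow> ('n \<Rightarrow> real) \<Rightarrow> real^'d^'n" where
  "data_matrix x y = (\<chi> i. y i *\<^sub>R x i)"

definition unif :: "real^'n" where
  "unif = (\<chi> i. 1 / real CARD('n))"

definition prob_simplex :: "(real^'n) set" where
  "prob_simplex = {p. (\<forall>i. 0 \<le> p $ i) \<and> (\<Sum>i\<in>UNIV. p $ i) = 1}"

text \<open>KL divergence (Bregman divergence of negative entropy); 0 log 0 = 0 holds automatically.\<close>
definition KL :: "real^'n \<Rightarrow> real^'n \<Rightarrow> real" where
  "KL p q = (\<Sum>i\<in>UNIV. p $ i * ln (p $ i / q $ i))"

definition alpha :: "nat \<Rightarrow> real" where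
  "alpha t = real t"

definition perc_q :: "('n \<Rightarrow> real^'d) \<Rightarrow> ('n \<Rightarrow> real) \<Rightarrow> real^'d \<Rightarrow> real^'n" where
  "perc_q x y v = (\<chi> i. exp (- y i * (v \<bullet> x i)) / (\<Sum>j\<in>UNIV. exp (- y j * (v \<bullet> x j))))"

fun accel_perc :: "('n \<Rightarrow> real^'d) \<Rightarrow> ('n \<Rightarrow> real) \<Rightarrow> nat \<Rightarrow> (real^'d) \<times> (real^'n) \<times> (real^'d)" where
  "accel_perc x y 0 = (0, unif, 0)"
| "accel_perc x y (Suc s) =
     (let (v, q, g) = accel_perc x y s;
          t = real (Suc s);
          A = data_matrix x y;
          theta = t / (2 * (t + 1));
          beta = t / (t + 1);
          v' = v - theta *\<^sub>R (g - transpose A *v q);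
          q' = perc_q x y v';
          g' = beta *\<^sub>R (g - transpose A *v q')
      in (v', q', g'))"

definition perc_v where "perc_v x y t = fst (accel_perc x y t)"
definition perc_qs where "perc_qs x y t = fst (snd (accel_perc x y t))"
definition perc_g where "perc_g x y t = snd (snd (accel_perc x y t))"

definition game :: "real^'d^'n \<Rightarrow> real^'d \<Rightarrow> real^'n \<Rightarrow> real" where
  "game A w p = p \<bullet> (A *v w) - 1/2 * (norm w)\<^sup>2"

definition w_obj :: "real^'d^'n \<Rightarrow> (nat \<Rightarrow> real^'n) \<Rightarrow> nat \<Rightarrow> real^'d \<Rightarrow> real" where
  "w_obj A p t w = (\<Sum>j=1..<t. alpha j * (- game A w (p j))) + alpha t * (- game A w (p (t - 1)))"

definition p_obj :: "real^'d^'n \<Rightarrow> (nat \<Rightarrow> real^'d) \<Rightarrow> nat \<Rightarrow> real^'n \<Rightarrow> real" where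
  "p_obj A w t q = 1/4 * (\<Sum>s=1..t. alpha s * game A (w s) q) + KL q unif"

definition wbar :: "(nat \<Rightarrow> real^'d) \<Rightarrow> nat \<Rightarrow> real^'d" where
  "wbar w T = (1 / (\<Sum>t=1..T. alpha t)) *\<^sub>R (\<Sum>t=1..T. alpha t *\<^sub>R w t)"

end

theory Submission
  imports Defs
begin

(*
  Both best responses have closed forms. The w-player minimises a strongly convex quadratic, so
  w_t is a normalised weighted sum of the gradients A^T p_j. The p-player minimises a linear
  function plus KL(p, 1/n) over the simplex; by Gibbs' variational principle (KL >= 0, with
  equality only for equal arguments) the minimiser is the Gibbs distribution of the linear
  coefficients, i.e. the softmax of -A (1/4 sum_s alpha_s w_s). An induction then shows that the
  Perceptron keeps v_t = 1/4 sum_s alpha_s w_s and g_t = -(1/(t+1)) sum_j alpha_j A^T p_j: the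
  step sizes theta_{t-1} and beta_t are exactly those that propagate these invariants, and then
  q_t and p_t are the same softmax. The labels y^(i) need not be +-1.
*)

lemma sum_alpha: "(\<Sum>j=1..t. alpha j) = real t * (real t + 1) / 2"
  by (induction t) (auto simp: alpha_def field_simps)

lemma mult_ln_divide_ge_diff:
  fixes q s :: real
  assumes "0 \<le> q" "0 < s"
  shows "q - s \<le> q * ln (q / s)"
proof (cases "q = 0")
  case False
  with assms have "q > 0" by simp
  with assms have "q * ln (s / q) \<le> q * (s / q - 1)"
    by (intro mult_left_mono ln_le_minus_one) auto
  also have "\<dots> = s - q" using \<open>q > 0\<close> by (simp add: field_simps)
  finally show ?thesis using \<open>q > 0\<close> assms by (simp add: ln_div algebra_simps)
qed (use assms in simp)

lemma mult_ln_divide_eq_diff_iff: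
  fixes q s :: real
  assumes "0 \<le> q" "0 < s"
  shows "q * ln (q / s) = q - s \<longleftrightarrow> q = s"
proof
  assume eq: "q * ln (q / s) = q - s"
  show "q = s"
  proof (cases "q = 0")
    case False
    with assms have "q > 0" by simp
    with eq assms have "ln (s / q) = s / q - 1" by (simp add: ln_div field_simps)
    with \<open>q > 0\<close> assms have "s / q = 1" by (intro ln_eq_minus_one) auto
    then show ?thesis by simp
  qed (use eq assms in simp)
qed simp

lemma KL_nonpos_imp_eq:
  assumes z: "z \<in> prob_simplex" and s: "s \<in> prob_simplex" and s_pos: "\<And>i. 0 < s $ i"
    and "KL z s \<le> 0"
  shows "z = s"
proof -
  \<comment> \<open>The corrections z_i - s_i sum to 0 and make every summand of KL z s nonnegative.\<close>
  define d where "d i = z $ i * ln (z $ i / s $ i) - (z $ i - s $ i)" for i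
  have z_nonneg: "0 \<le> z $ i" for i using z by (simp add: prob_simplex_def)
  have d_nonneg: "0 \<le> d i" for i
    using mult_ln_divide_ge_diff[OF z_nonneg s_pos] by (simp add: d_def)
  have "(\<Sum>i\<in>UNIV. d i) = KL z s"
    using z s by (simp add: d_def KL_def prob_simplex_def sum_subtractf)
  with \<open>KL z s \<le> 0\<close> d_nonneg have "(\<Sum>i\<in>UNIV. d i) = 0"
    by (metis order_antisym sum_nonneg)
  with d_nonneg have "d i = 0" for i by (simp add: sum_nonneg_eq_0_iff)
  then have "z $ i = s $ i" for i
    using mult_ln_divide_eq_diff_iff[OF z_nonneg s_pos] by (simp add: d_def)
  then show ?thesis by (simp add: vec_eq_iff)
qed

lemma KL_self: "KL p p = 0"
  unfolding KL_def by (rule sum.neutral) simp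

definition gibbs_dist :: "('n::finite \<Rightarrow> real) \<Rightarrow> real^'n" where
  "gibbs_dist c = (\<chi> i. exp (- c i) / (\<Sum>j\<in>UNIV. exp (- c j)))"

lemma gibbs_dist_pos: "0 < gibbs_dist c $ i"
  using sum_pos[of UNIV "\<lambda>j. exp (- c j)"] by (simp add: gibbs_dist_def)

lemma gibbs_dist_in_prob_simplex: "gibbs_dist c \<in> prob_simplex"
  using gibbs_dist_pos[of c] sum_pos[of UNIV "\<lambda>j. exp (- c j)"]
  by (simp add: prob_simplex_def gibbs_dist_def less_imp_le flip: sum_divide_distrib)

lemma linear_plus_KL_unif:
  fixes c :: "'n::finite \<Rightarrow> real"
  assumes q: "q \<in> prob_simplex"
  shows "(\<Sum>i\<in>UNIV. q $ i * c i) + KL q unif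
    = KL q (gibbs_dist c) + ln (real CARD('n)) - ln (\<Sum>j\<in>UNIV. exp (- c j))"
proof -
  define Z where "Z = (\<Sum>j\<in>UNIV. exp (- c j))"
  have "Z > 0" by (simp add: Z_def sum_pos)
  have summand: "q $ i * c i + q $ i * ln (q $ i / unif $ i)
      = q $ i * ln (q $ i / gibbs_dist c $ i) + q $ i * (ln (real CARD('n)) - ln Z)" for i
  proof (cases "q $ i = 0")
    case False
    with q have "q $ i > 0" by (simp add: prob_simplex_def order_le_neq_trans)
    with \<open>Z > 0\<close> show ?thesis
      by (simp add: unif_def gibbs_dist_def Z_def ln_div ln_mult algebra_simps)
  qed simp
  have "(\<Sum>i\<in>UNIV. q $ i * c i) + KL q unif
      = (\<Sum>i\<in>UNIV. q $ i * ln (q $ i / gibbs_dist c $ i) + q $ i * (ln (real CARD('n)) - ln Z))"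
    by (simp add: KL_def summand flip: sum.distrib)
  also have "\<dots> = KL q (gibbs_dist c) + (\<Sum>i\<in>UNIV. q $ i) * (ln (real CARD('n)) - ln Z)"
    by (simp add: KL_def sum.distrib sum_distrib_right)
  also have "(\<Sum>i\<in>UNIV. q $ i) = 1" using q by (simp add: prob_simplex_def)
  finally show ?thesis by (simp add: Z_def)
qed

lemma is_arg_min_linear_plus_KL_unif:
  fixes c :: "'n::finite \<Rightarrow> real"
  assumes am: "is_arg_min f (\<lambda>q. q \<in> prob_simplex) z"
    and f: "\<And>q. q \<in> prob_simplex \<Longrightarrow> f q = (\<Sum>i\<in>UNIV. q $ i * c i) + KL q unif + K"
  shows "z = gibbs_dist c"
proof (rule KL_nonpos_imp_eq[OF _ gibbs_dist_in_prob_simplex gibbs_dist_pos])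
  show z: "z \<in> prob_simplex" using am by (simp add: is_arg_min_def)
  have "f z \<le> f (gibbs_dist c)"
    using am gibbs_dist_in_prob_simplex unfolding is_arg_min_def by (meson not_le)
  then show "KL z (gibbs_dist c) \<le> 0"
    by (simp add: f[OF z] f[OF gibbs_dist_in_prob_simplex] linear_plus_KL_unif[OF z]
        linear_plus_KL_unif[OF gibbs_dist_in_prob_simplex] KL_self)
qed

lemma is_arg_min_quadratic:
  fixes f :: "'a::real_inner \<Rightarrow> real"
  assumes "S > 0" and am: "is_arg_min f (\<lambda>_. True) z"
    and f: "\<And>w. f w = S / 2 * (norm w)\<^sup>2 - b \<bullet> w"
  shows "z = (1 / S) *\<^sub>R b"
proof -
  have excess: "f w - f ((1 / S) *\<^sub>R b) = S / 2 * (norm (w - (1 / S) *\<^sub>R b))\<^sup>2" for w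
    using \<open>S > 0\<close> unfolding f power2_norm_eq_inner
    by (simp add: inner_diff_left inner_diff_right inner_commute field_simps power2_eq_square)
  have "f z \<le> f ((1 / S) *\<^sub>R b)" using am unfolding is_arg_min_def by (meson not_le)
  with excess[of z] have "S / 2 * (norm (z - (1 / S) *\<^sub>R b))\<^sup>2 \<le> 0" by linarith
  with \<open>S > 0\<close> have "(norm (z - (1 / S) *\<^sub>R b))\<^sup>2 \<le> 0"
    by (simp add: mult_le_0_iff)
  then show ?thesis by simp
qed

lemma w_obj_Suc_eq_quadratic:
  fixes A :: "real^'d^'n"
  shows "w_obj A p (Suc s) w = (\<Sum>j=1..Suc s. alpha j) / 2 * (norm w)\<^sup>2
    - ((\<Sum>j=1..s. alpha j *\<^sub>R (transpose A *v p j)) + alpha (Suc s) *\<^sub>R (transpose A *v p s)) \<bullet> w"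
  by (simp add: w_obj_def game_def atLeastLessThanSuc_atLeastAtMost dot_lmul_matrix
      inner_sum_left inner_add_left sum_subtractf algebra_simps flip: sum_distrib_right sum_divide_distrib)

lemma is_arg_min_w_obj:
  fixes A :: "real^'d^'n"
  assumes "is_arg_min (w_obj A p (Suc s)) (\<lambda>_. True) z"
  shows "z = (1 / (\<Sum>j=1..Suc s. alpha j)) *\<^sub>R
    ((\<Sum>j=1..s. alpha j *\<^sub>R (transpose A *v p j)) + alpha (Suc s) *\<^sub>R (transpose A *v p s))"
  by (rule is_arg_min_quadratic[OF _ assms w_obj_Suc_eq_quadratic]) (subst sum_alpha, simp)

lemma data_matrix_mult_nth: "(data_matrix x y *v w) $ i = y i * (x i \<bullet> w)"
  by (simp add: data_matrix_def matrix_vector_mult_def inner_vec_def sum_distrib_left mult_ac)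

lemma p_obj_eq_linear_plus_KL:
  fixes x :: "'n::finite \<Rightarrow> real^'d::finite" and w :: "nat \<Rightarrow> real^'d" and t :: nat
  defines "v \<equiv> (1/4) *\<^sub>R (\<Sum>s=1..t. alpha s *\<^sub>R w s)"
  shows "p_obj (data_matrix x y) w t q = (\<Sum>i\<in>UNIV. q $ i * (y i * (v \<bullet> x i))) + KL q unif
    - 1/8 * (\<Sum>s=1..t. alpha s * (norm (w s))\<^sup>2)"
proof -
  have "(\<Sum>i\<in>UNIV. q $ i * (y i * (v \<bullet> x i)))
      = 1/4 * (\<Sum>s=1..t. alpha s * (\<Sum>i\<in>UNIV. q $ i * (y i * (w s \<bullet> x i))))"
    by (simp add: v_def inner_sum_left sum_distrib_left mult_ac sum.swap[of _ UNIV])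
  also have "\<dots> = 1/4 * (\<Sum>s=1..t. alpha s * (q \<bullet> (data_matrix x y *v w s)))"
    by (simp add: inner_vec_def data_matrix_mult_nth mult.commute)
  finally show ?thesis
    by (simp add: p_obj_def game_def algebra_simps sum_subtractf sum_distrib_left)
qed

lemma perc_q_eq_gibbs_dist: "perc_q x y v = gibbs_dist (\<lambda>i. y i * (v \<bullet> x i))"
  by (simp add: perc_q_def gibbs_dist_def)

lemma is_arg_min_p_obj:
  fixes x :: "'n::finite \<Rightarrow> real^'d::finite"
  assumes "is_arg_min (p_obj (data_matrix x y) w t) (\<lambda>q. q \<in> prob_simplex) z"
  shows "z = perc_q x y ((1/4) *\<^sub>R (\<Sum>s=1..t. alpha s *\<^sub>R w s))"
  unfolding perc_q_eq_gibbs_dist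
  by (rule is_arg_min_linear_plus_KL_unif[OF assms]) (simp add: p_obj_eq_linear_plus_KL)

lemma perc_0: "perc_v x y 0 = 0" "perc_qs x y 0 = unif" "perc_g x y 0 = 0"
  by (simp_all add: perc_v_def perc_qs_def perc_g_def)

lemma perc_v_Suc:
  "perc_v x y (Suc s) = perc_v x y s - (real (Suc s) / (2 * (real (Suc s) + 1)))
     *\<^sub>R (perc_g x y s - transpose (data_matrix x y) *v perc_qs x y s)"
  by (simp add: perc_v_def perc_qs_def perc_g_def Let_def split: prod.split)

lemma perc_qs_Suc: "perc_qs x y (Suc s) = perc_q x y (perc_v x y (Suc s))"
  by (simp add: perc_v_def perc_qs_def Let_def split: prod.split)

lemma perc_g_Suc:
  "perc_g x y (Suc s) = (real (Suc s) / (real (Suc s) + 1))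
     *\<^sub>R (perc_g x y s - transpose (data_matrix x y) *v perc_qs x y (Suc s))"
  by (simp add: perc_v_def perc_qs_def perc_g_def Let_def split: prod.split)

lemma accel_perc_tracks_game_dynamics:
  fixes x :: "'n::finite \<Rightarrow> real^'d::finite" and y :: "'n \<Rightarrow> real"
    and w :: "nat \<Rightarrow> real^'d" and p :: "nat \<Rightarrow> real^'n"
  defines "a \<equiv> \<lambda>j. transpose (data_matrix x y) *v p j"
  assumes p0: "p 0 = unif"
    and w_eq: "\<And>s. Suc s \<le> T \<Longrightarrow> w (Suc s) = (1 / (\<Sum>j=1..Suc s. alpha j))
      *\<^sub>R ((\<Sum>j=1..s. alpha j *\<^sub>R a j) + alpha (Suc s) *\<^sub>R a s)"
    and p_eq: "\<And>t. 1 \<le> t \<Longrightarrow> t \<le> T \<Longrightarrow> p t = perc_q x y ((1/4) *\<^sub>R (\<Sum>s=1..t. alpha s *\<^sub>R w s))"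
    and "t \<le> T"
  shows "perc_v x y t = (1/4) *\<^sub>R (\<Sum>s=1..t. alpha s *\<^sub>R w s) \<and> perc_qs x y t = p t
    \<and> perc_g x y t = (- 1 / real (Suc t)) *\<^sub>R (\<Sum>j=1..t. alpha j *\<^sub>R a j)"
  using \<open>t \<le> T\<close>
proof (induction t)
  case 0
  then show ?case by (simp add: perc_0 p0)
next
  case (Suc s)
  define V where "V t = (1/4) *\<^sub>R (\<Sum>k=1..t. alpha k *\<^sub>R w k)" for t
  define B where "B = (\<Sum>j=1..s. alpha j *\<^sub>R a j)"
  define r where "r = real (Suc s)"
  have r_nonzero: "r \<noteq> 0" "r + 1 \<noteq> 0" by (simp_all add: r_def)
  from Suc have v: "perc_v x y s = V s" and q: "perc_qs x y s = p s"
    and g: "perc_g x y s = (- 1 / r) *\<^sub>R B"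
    by (simp_all add: V_def B_def r_def)
  have "perc_v x y (Suc s) = V s - (r / (2 * (r + 1))) *\<^sub>R ((- 1 / r) *\<^sub>R B - a s)"
    by (simp add: perc_v_Suc v q g a_def r_def)
  also have "\<dots> = V s + (1 / (2 * (r + 1))) *\<^sub>R (B + r *\<^sub>R a s)"
    using r_nonzero by (simp add: algebra_simps)
  also have "\<dots> = V s + (1/4 * alpha (Suc s)) *\<^sub>R w (Suc s)"
  proof -
    have "1/4 * alpha (Suc s) * (1 / (\<Sum>j=1..Suc s. alpha j)) = 1 / (2 * (r + 1))"
      unfolding sum_alpha unfolding alpha_def r_def by (simp add: divide_simps) (simp add: algebra_simps)
    then show ?thesis by (simp add: w_eq[OF Suc.prems] B_def alpha_def r_def)
  qed
  also have "\<dots> = V (Suc s)" by (simp add: V_def scaleR_add_right)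
  finally have v': "perc_v x y (Suc s) = V (Suc s)" .
  have q': "perc_qs x y (Suc s) = p (Suc s)"
    using p_eq[of "Suc s"] Suc.prems by (simp add: perc_qs_Suc v' V_def)
  have "perc_g x y (Suc s) = (r / (r + 1)) *\<^sub>R ((- 1 / r) *\<^sub>R B - a (Suc s))"
    by (simp add: perc_g_Suc g q' a_def r_def)
  also have "\<dots> = (- 1 / (r + 1)) *\<^sub>R (B + r *\<^sub>R a (Suc s))"
    using r_nonzero by (simp add: algebra_simps divide_simps)
  finally show ?case using v' q' by (simp add: V_def B_def r_def alpha_def add.commute)
qed

lemma sum_alpha_scaleR_wbar: "(\<Sum>t=1..T. alpha t) *\<^sub>R wbar w T = (\<Sum>t=1..T. alpha t *\<^sub>R w t)"
proof (cases "T = 0")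
  case False
  then have "(\<Sum>t=1..T. alpha t) \<noteq> 0" by (subst sum_alpha) simp
  then show ?thesis by (simp add: wbar_def)
qed simp

theorem proposition2:
  fixes x :: "'n::finite \<Rightarrow> real^'d::finite" and y :: "'n \<Rightarrow> real"
    and w :: "nat \<Rightarrow> real^'d" and p :: "nat \<Rightarrow> real^'n" and T :: nat
  assumes y_pm: "\<And>i. y i \<in> {-1, 1}"
    and p0: "p 0 = unif"
    and w_argmin: "\<And>t. 1 \<le> t \<Longrightarrow> t \<le> T \<Longrightarrow>
        is_arg_min (w_obj (data_matrix x y) p t) (\<lambda>_. True) (w t)"
    and p_argmin: "\<And>t. 1 \<le> t \<Longrightarrow> t \<le> T \<Longrightarrow>
        is_arg_min (p_obj (data_matrix x y) w t) (\<lambda>q. q \<in> prob_simplex) (p t)"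
  shows "perc_qs x y T = p T
    \<and> perc_v x y T = (1/4) *\<^sub>R (\<Sum>t=1..T. alpha t *\<^sub>R w t)
    \<and> perc_v x y T = (1/4 * (\<Sum>t=1..T. alpha t)) *\<^sub>R wbar w T"
proof -
  have w_eq: "w (Suc s) = (1 / (\<Sum>j=1..Suc s. alpha j)) *\<^sub>R
      ((\<Sum>j=1..s. alpha j *\<^sub>R (transpose (data_matrix x y) *v p j))
        + alpha (Suc s) *\<^sub>R (transpose (data_matrix x y) *v p s))" if "Suc s \<le> T" for s
    using is_arg_min_w_obj[OF w_argmin] that by simp
  have p_eq: "p t = perc_q x y ((1/4) *\<^sub>R (\<Sum>s=1..t. alpha s *\<^sub>R w s))"
    if "1 \<le> t" "t \<le> T" for t
    using is_arg_min_p_obj p_argmin that by blast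
  have "perc_v x y T = (1/4) *\<^sub>R (\<Sum>t=1..T. alpha t *\<^sub>R w t) \<and> perc_qs x y T = p T"
    using accel_perc_tracks_game_dynamics[OF p0 w_eq p_eq order_refl] by simp
  moreover have "(1/4 * (\<Sum>t=1..T. alpha t)) *\<^sub>R wbar w T = (1/4) *\<^sub>R (\<Sum>t=1..T. alpha t *\<^sub>R w t)"
    by (metis scaleR_scaleR sum_alpha_scaleR_wbar)
  ultimately show ?thesis by simp
qed

end
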